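(* Let $1<p<\infty$, $p'=p/(p-1)$, and let $f\in L_p([-\pi,\pi])$ have Fourier series $\sum_{k\in\mathbb Z}a_ke^{ikx}$. Then $$\|a\|_{n_{p',p}}\lesssim\|f\|_{L_p([-\pi,\pi])},$$ with a constant depending only on $p$.
   Context: The Fourier coefficients are $a_k=\frac1{2\pi}\int_{-\pi}^{\pi}f(x)e^{-ikx}dx$. An interval in $\mathbb Z$ is a finite nonempty set of consecutive integers; $\mathcal W$ denotes the set of all intervals and $|w|$ the cardinality of $w$. For $k\in\mathbb N$, $\widetilde a_k=\sup_{w\in\mathcal W,\ |w|\ge k}\frac1{|w|}\big|\sum_{j\in w}a_j\big|$. For $1<r<\infty$, $1<q<\infty$ the net norm is $\|a\|_{n_{r,q}}=\big(\sum_{k=1}^\infty k^{q/r-1}\widetilde a_k^{\,q}\big)^{1/q}$; thus $\|a\|_{n_{p',p}}=\big(\sum_{k\ge1}k^{p-2}\widetilde a_k^{\,p}\big)^{1/p}$. *)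

theory Defs
  imports "HOL-Analysis.Analysis"
begin

definition fourier_coeff :: "(real \<Rightarrow> complex) \<Rightarrow> int \<Rightarrow> complex" where
  "fourier_coeff f k =
     complex_of_real (1 / (2 * pi)) *
       (LINT x:{-pi..pi}|lborel. f x * exp (- (\<i> * of_int k * of_real x)))"

definition int_intervals :: "int set set" where
  "int_intervals = {{m..n} | m n. m \<le> n}"

definition net_max :: "(int \<Rightarrow> complex) \<Rightarrow> nat \<Rightarrow> real" where
  "net_max a k = Sup {norm (\<Sum>j\<in>w. a j) / real (card w) | w. w \<in> int_intervals \<and> card w \<ge> k}"

definition net_term :: "real \<Rightarrow> real \<Rightarrow> (int \<Rightarrow> complex) \<Rightarrow> nat \<Rightarrow> real" where
  "net_term r q a k = real k powr (q / r - 1) * net_max a k powr q"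

definition net_norm :: "real \<Rightarrow> real \<Rightarrow> (int \<Rightarrow> complex) \<Rightarrow> real" where
  "net_norm r q a = (\<Sum>k. net_term r q a (Suc k)) powr (1 / q)"

definition Lp_norm_pi :: "real \<Rightarrow> (real \<Rightarrow> complex) \<Rightarrow> real" where
  "Lp_norm_pi p f = (LINT x:{-pi..pi}|lborel. norm (f x) powr p) powr (1 / p)"

end

theory Submission
  imports Defs
begin

(* Write a_k for the Fourier coefficients of f and K_k(x) = min 1 (1 / (k |x|)).  The average of a
   over an interval w of integers is (1 / 2 pi) int f D_w / |w| with the Dirichlet sum
   D_w(x) = sum_{j in w} e^{-ijx}; since |D_w(x)| <= 8 |w| K_|w|(x) and K_k decreases in k, this gives
   tilde a_k <= 2 int |f| K_k.  Fix 0 < s < min 1 (p - 1).  Hoelder's inequality with the weight |x|^s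
   gives (int |f| K_k)^p <= (int K_k |f|^p |x|^s) (int K_k |x|^(-s/(p-1)))^(p-1), and the last integral
   is O(k^(s/(p-1) - 1)).  Hence k^(p-2) tilde a_k^p <= C k^(s-1) int K_k |f|^p |x|^s, and summing over
   k costs only sum_k k^(s-1) K_k(x) <= C' |x|^(-s), which cancels the weight. *)

section \<open>Sums of powers\<close>

(* Multiplying by e lets one statement cover both signs of e. *)
lemma powr_increment_lower_bound:
  fixes e K :: real
  assumes "0 < K" "e \<le> 1"
  shows "e\<^sup>2 * (K + 1) powr (e - 1) \<le> e * ((K + 1) powr e - K powr e)"
proof -
  have "((\<lambda>x. x powr e) has_real_derivative e * x powr (e - 1)) (at x)" if "K \<le> x" for x
    using assms that by (auto intro!: derivative_eq_intros)
  then obtain z where z: "K < z" "z < K + 1" "(K + 1) powr e - K powr e = e * z powr (e - 1)"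
    using MVT2[of K "K + 1" "\<lambda>x. x powr e" "\<lambda>x. e * x powr (e - 1)"] assms by auto
  have "(K + 1) powr (e - 1) \<le> z powr (e - 1)"
    using z assms by (intro powr_mono2') auto
  then show ?thesis
    unfolding z(3) power2_eq_square mult.assoc[symmetric] by (intro mult_left_mono) auto
qed

lemma sum_powr_le:
  fixes s :: real
  assumes "0 < s" "s \<le> 1"
  shows "(\<Sum>k=1..n. real k powr (s - 1)) \<le> real n powr s / s"
proof (induction n)
  case (Suc n)
  show ?case
  proof (cases "n = 0")
    case False
    have "s\<^sup>2 * (real n + 1) powr (s - 1) \<le> s * ((real n + 1) powr s - real n powr s)"
      using powr_increment_lower_bound[of "real n" s] False assms by simp
    then have "s * (real n + 1) powr (s - 1) \<le> (real n + 1) powr s - real n powr s"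
      using assms by (simp add: power2_eq_square mult.assoc)
    then have "(real n + 1) powr (s - 1) \<le> ((real n + 1) powr s - real n powr s) / s"
      using assms by (simp add: pos_le_divide_eq mult.commute)
    then show ?thesis
      using Suc.IH by (simp add: add.commute diff_divide_distrib)
  qed (use assms in simp)
qed simp

lemma sum_powr_tail_le:
  fixes s :: real
  assumes "0 < s" "s < 1" "1 \<le> L"
  shows "(\<Sum>k=L..n. real k powr (s - 2)) \<le> real L powr (s - 1) * (1 + 1 / (1 - s))"
proof (cases "L \<le> n")
  case True
  have "(\<Sum>k=L..n. real k powr (s - 2)) \<le> real L powr (s - 2) + (real L powr (s - 1) - real n powr (s - 1)) / (1 - s)"
    using True
  proof (induction n rule: dec_induct)
    case (step n)
    have "(s - 1)\<^sup>2 * (real n + 1) powr (s - 2) \<le> (s - 1) * ((real n + 1) powr (s - 1) - real n powr (s - 1))"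
      using powr_increment_lower_bound[of "real n" "s - 1"] step.hyps assms by simp
    then have "(1 - s) * ((1 - s) * (real n + 1) powr (s - 2)) \<le> (1 - s) * (real n powr (s - 1) - (real n + 1) powr (s - 1))"
      by (simp add: power2_eq_square algebra_simps)
    then have "(1 - s) * (real n + 1) powr (s - 2) \<le> real n powr (s - 1) - (real n + 1) powr (s - 1)"
      using assms by simp
    then have "(real n + 1) powr (s - 2) \<le> (real n powr (s - 1) - (real n + 1) powr (s - 1)) / (1 - s)"
      using assms by (simp add: pos_le_divide_eq mult.commute)
    with step.IH step.hyps show ?case
      by (simp add: add.commute diff_divide_distrib)
  qed simp
  also have "\<dots> \<le> real L powr (s - 2) + real L powr (s - 1) / (1 - s)"
    using assms by (simp add: divide_right_mono)
  also have "real L powr (s - 2) \<le> real L powr (s - 1)"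
    using assms by (intro powr_mono) auto
  finally show ?thesis
    by (simp add: distrib_left)
next
  case False
  then show ?thesis
    using assms by simp
qed

section \<open>The decay kernel\<close>

(* At x = 0 the junk value 1 / 0 = 0 makes the kernel vanish; {0} is a null set. *)
definition decay_kernel :: "real \<Rightarrow> real \<Rightarrow> real" where
  "decay_kernel k x = min 1 (1 / (k * \<bar>x\<bar>))"

lemma decay_kernel_nonneg: "0 \<le> k \<Longrightarrow> 0 \<le> decay_kernel k x"
  by (simp add: decay_kernel_def)

lemma decay_kernel_le_one: "decay_kernel k x \<le> 1"
  by (simp add: decay_kernel_def)

lemma decay_kernel_at_zero [simp]: "decay_kernel k 0 = 0"
  by (simp add: decay_kernel_def)

lemma decay_kernel_antimono:
  assumes "0 < k" "k \<le> k'"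
  shows "decay_kernel k' x \<le> decay_kernel k x"
proof (cases "x = 0")
  case False
  have "1 / (k' * \<bar>x\<bar>) \<le> 1 / (k * \<bar>x\<bar>)"
    using assms False by (intro divide_left_mono mult_right_mono mult_pos_pos) auto
  then show ?thesis
    unfolding decay_kernel_def by (intro min.mono) auto
qed simp

lemma decay_kernel_measurable [measurable]: "decay_kernel k \<in> borel_measurable borel"
  unfolding decay_kernel_def by measurable

lemma sum_decay_kernel_le:
  fixes s x :: real
  assumes s: "0 < s" "s < 1"
  shows "(\<Sum>k=1..n. real k powr (s - 1) * decay_kernel (real k) x) * \<bar>x\<bar> powr s
           \<le> 1 / s + 1 + 1 / (1 - s)"
proof (cases "x = 0")
  case False
  define c where "c = 1 / \<bar>x\<bar>"
  define K where "K = nat \<lfloor>c\<rfloor>"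
  have c: "0 < c" "real K \<le> c" "c < real K + 1"
    using False by (auto simp: c_def K_def)
  let ?t = "\<lambda>k. real k powr (s - 1) * decay_kernel (real k) x"
  have head: "?t k \<le> real k powr (s - 1)" for k
    by (simp add: mult_left_le decay_kernel_le_one)
  have tail: "?t k = c * real k powr (s - 2)" if "K < k" for k
  proof -
    have "c < real k"
      using that c by linarith
    then have "decay_kernel (real k) x = c / real k"
      using False c by (simp add: decay_kernel_def c_def min_def field_simps)
    moreover have "real k powr (s - 1) = real k powr (s - 2) * real k"
      using c \<open>c < real k\<close> by (simp add: powr_diff field_simps power2_eq_square)
    ultimately show ?thesis
      using c \<open>c < real k\<close> by simp
  qed
  have "(\<Sum>k=1..n. ?t k) \<le> (\<Sum>k\<in>{1..K} \<union> {K+1..n}. ?t k)"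
    by (intro sum_mono2) (auto simp: decay_kernel_nonneg)
  also have "\<dots> = (\<Sum>k=1..K. ?t k) + c * (\<Sum>k=K+1..n. real k powr (s - 2))"
    by (subst sum.union_disjoint) (auto simp: tail sum_distrib_left)
  also have "(\<Sum>k=1..K. ?t k) \<le> c powr s / s"
  proof -
    have "(\<Sum>k=1..K. ?t k) \<le> (\<Sum>k=1..K. real k powr (s - 1))"
      by (intro sum_mono head)
    also have "\<dots> \<le> real K powr s / s"
      using s by (intro sum_powr_le) auto
    also have "\<dots> \<le> c powr s / s"
      using c s by (intro divide_right_mono powr_mono2) auto
    finally show ?thesis .
  qed
  also have "c * (\<Sum>k=K+1..n. real k powr (s - 2)) \<le> c * (c powr (s - 1) * (1 + 1 / (1 - s)))"
  proof -
    have "(\<Sum>k=K+1..n. real k powr (s - 2)) \<le> real (K + 1) powr (s - 1) * (1 + 1 / (1 - s))"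
      using sum_powr_tail_le[of s "K + 1" n] s by simp
    also have "\<dots> \<le> c powr (s - 1) * (1 + 1 / (1 - s))"
      using c s by (intro mult_right_mono powr_mono2') auto
    finally show ?thesis
      using c by (intro mult_left_mono) auto
  qed
  also have "c powr s / s + c * (c powr (s - 1) * (1 + 1 / (1 - s))) = c powr s * (1 / s + 1 + 1 / (1 - s))"
    using c by (simp add: powr_diff field_simps)
  finally have "(\<Sum>k=1..n. ?t k) \<le> c powr s * (1 / s + 1 + 1 / (1 - s))"
    by simp
  then have "(\<Sum>k=1..n. ?t k) * \<bar>x\<bar> powr s \<le> c powr s * (1 / s + 1 + 1 / (1 - s)) * \<bar>x\<bar> powr s"
    by (rule mult_right_mono) simp
  also have "\<dots> = (c * \<bar>x\<bar>) powr s * (1 / s + 1 + 1 / (1 - s))"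
    using c by (simp add: powr_mult)
  finally show ?thesis
    using False by (simp add: c_def)
qed (use s in simp)

section \<open>Dirichlet sums\<close>

lemma quarter_le_sin:
  fixes t :: real
  assumes "0 \<le> t" "t \<le> pi / 2"
  shows "t / 4 \<le> sin t"
proof (cases "t \<le> pi / 3")
  case True
  have "(\<lambda>u. sin u - u / 2) 0 \<le> (\<lambda>u. sin u - u / 2) t"
  proof (rule DERIV_nonneg_imp_nondecreasing[OF assms(1)])
    fix u assume u: "0 \<le> u" "u \<le> t"
    have "cos (pi / 3) \<le> cos u"
      using u True by (intro cos_monotone_0_pi_le) auto
    then show "\<exists>y. ((\<lambda>u. sin u - u / 2) has_real_derivative y) (at u) \<and> 0 \<le> y"
      by (auto simp: cos_60 intro!: derivative_eq_intros)
  qed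
  then show ?thesis
    using assms by simp
next
  case False
  have "sin (pi / 3) \<le> sin t"
    using False assms by (intro sin_monotone_2pi_le) auto
  moreover have "t / 4 \<le> 1 / 2"
    using assms pi_less_4 by simp
  ultimately show ?thesis
    unfolding sin_60 using real_sqrt_ge_one[of 3] by linarith
qed

lemma norm_one_minus_exp_ii:
  fixes x :: real
  shows "norm (1 - exp (- (\<i> * of_real x))) = 2 * \<bar>sin (x / 2)\<bar>"
proof -
  have "(norm (1 - exp (- (\<i> * of_real x))))\<^sup>2 = (1 - cos x)\<^sup>2 + (sin x)\<^sup>2"
    by (simp add: cmod_power2 Re_exp Im_exp)
  also have "\<dots> = 2 - 2 * cos x"
    by (simp add: power2_eq_square algebra_simps sin_squared_eq)
  also have "\<dots> = (2 * \<bar>sin (x / 2)\<bar>)\<^sup>2"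
    using cos_double_sin[of "x / 2"] by (simp add: power2_eq_square)
  finally show ?thesis
    by (rule power2_eq_imp_eq) auto
qed

lemma norm_one_minus_exp_ii_ge:
  fixes x :: real
  assumes "\<bar>x\<bar> \<le> pi"
  shows "\<bar>x\<bar> / 4 \<le> norm (1 - exp (- (\<i> * of_real x)))"
proof -
  have "\<bar>x\<bar> / 2 / 4 \<le> sin (\<bar>x\<bar> / 2)"
    using assms by (intro quarter_le_sin) auto
  also have "sin (\<bar>x\<bar> / 2) = \<bar>sin (x / 2)\<bar>"
    using assms sin_ge_zero[of "\<bar>x\<bar> / 2"] by (cases "0 \<le> x") auto
  finally show ?thesis
    by (simp add: norm_one_minus_exp_ii)
qed

lemma norm_sum_exp_ii_le_card:
  fixes x :: real and m n :: int
  shows "norm (\<Sum>j\<in>{m..n}. exp (- (\<i> * of_int j * of_real x))) \<le> real (card {m..n})"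
  using norm_sum[of "\<lambda>j. exp (- (\<i> * of_int j * of_real x))" "{m..n}"] by simp

lemma norm_sum_exp_ii_le_inverse:
  fixes x :: real and m n :: int
  assumes "x \<noteq> 0" "\<bar>x\<bar> \<le> pi"
  shows "norm (\<Sum>j\<in>{m..n}. exp (- (\<i> * of_int j * of_real x))) \<le> 8 / \<bar>x\<bar>"
proof -
  define N where "N = nat (n - m + 1)"
  define z where "z = exp (- (\<i> * of_real x))"
  have z: "\<bar>x\<bar> / 4 \<le> norm (1 - z)"
    unfolding z_def using assms by (intro norm_one_minus_exp_ii_ge)
  then have "z \<noteq> 1"
    using assms by auto
  have "{m..n} = (\<lambda>l. m + int l) ` {..<N}"
  proof (intro set_eqI iffI)
    fix j assume "j \<in> {m..n}"
    then have "j = m + int (nat (j - m))" "nat (j - m) < N"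
      by (auto simp: N_def)
    then show "j \<in> (\<lambda>l. m + int l) ` {..<N}"
      by blast
  qed (auto simp: N_def)
  then have "(\<Sum>j\<in>{m..n}. exp (- (\<i> * of_int j * of_real x)))
      = (\<Sum>l<N. exp (- (\<i> * of_int (m + int l) * of_real x)))"
    by (simp add: sum.reindex inj_on_def)
  also have "\<dots> = exp (- (\<i> * of_int m * of_real x)) * (\<Sum>l<N. z ^ l)"
    by (simp add: z_def sum_distrib_left algebra_simps flip: exp_add exp_of_nat_mult)
  also have "\<dots> = exp (- (\<i> * of_int m * of_real x)) * ((1 - z ^ N) / (1 - z))"
    using \<open>z \<noteq> 1\<close> by (simp add: sum_gp_strict)
  finally have "norm (\<Sum>j\<in>{m..n}. exp (- (\<i> * of_int j * of_real x))) = norm (1 - z ^ N) / norm (1 - z)"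
    by (simp add: norm_mult norm_divide)
  also have "\<dots> \<le> 2 / (\<bar>x\<bar> / 4)"
  proof (rule frac_le)
    show "norm (1 - z ^ N) \<le> 2"
      using norm_triangle_ineq4[of 1 "z ^ N"] by (simp add: z_def norm_power)
  qed (use z assms in auto)
  finally show ?thesis
    by simp
qed

lemma norm_sum_exp_ii_le_decay_kernel:
  fixes x :: real and m n :: int
  assumes "x \<noteq> 0" "\<bar>x\<bar> \<le> pi"
  shows "norm (\<Sum>j\<in>{m..n}. exp (- (\<i> * of_int j * of_real x)))
           \<le> 8 * real (card {m..n}) * decay_kernel (real (card {m..n})) x"
proof (cases "m \<le> n")
  case True
  define N where "N = real (card {m..n})"
  have "1 \<le> N"
    using True by (simp add: N_def)
  show ?thesis
  proof (cases "1 \<le> 1 / (N * \<bar>x\<bar>)")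
    case True
    then show ?thesis
      using norm_sum_exp_ii_le_card[of x m n] \<open>1 \<le> N\<close>
      by (simp add: N_def decay_kernel_def min_def)
  next
    case False
    then have "8 * N * decay_kernel N x = 8 / \<bar>x\<bar>"
      using \<open>1 \<le> N\<close> assms by (simp add: decay_kernel_def min_def field_simps)
    then show ?thesis
      using norm_sum_exp_ii_le_inverse[OF assms, of m n] by (simp add: N_def)
  qed
qed simp

section \<open>Integrals of the decay kernel\<close>

lemma nonneg_has_integral_imp_set_integrable:
  fixes g :: "real \<Rightarrow> real"
  assumes "g \<in> borel_measurable borel" "S \<in> sets borel"
    and "(g has_integral I) S" "\<And>x. x \<in> S \<Longrightarrow> 0 \<le> g x"
  shows "set_integrable lborel S g" "(LINT x:S|lborel. g x) = I"
proof -
  have "g absolutely_integrable_on S"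
    using assms by (intro nonnegative_absolutely_integrable_1) (auto simp: integrable_on_def)
  moreover have "(\<lambda>x. indicator S x *\<^sub>R g x) \<in> borel_measurable lborel"
    using assms by measurable
  ultimately show S: "set_integrable lborel S g"
    by (simp add: set_integrable_def integrable_completion)
  show "(LINT x:S|lborel. g x) = I"
    using set_borel_integral_eq_integral(2)[OF S] assms(3) by (simp add: integral_unique)
qed

lemma has_integral_even:
  fixes g :: "real \<Rightarrow> real"
  assumes "\<And>x. g (- x) = g x" "0 \<le> c" "(g has_integral I) {0..c}"
  shows "(g has_integral 2 * I) {-c..c}"
proof -
  have "((\<lambda>x. g (- x)) has_integral I) {-c..-0}"
    using assms(3) by (simp only: has_integral_reflect_real)
  then have "(g has_integral I) {-c..0}"
    using assms(1) by simp
  then have "(g has_integral I + I) {-c..c}"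
    using assms(2,3) by (intro has_integral_combine[of _ 0]) auto
  then show ?thesis
    by (simp only: mult_2)
qed

lemma decay_kernel_powr_has_integral_near_zero:
  fixes k \<gamma> :: real
  assumes k: "1 \<le> k" and \<gamma>: "0 < \<gamma>" "\<gamma> < 1"
  shows "((\<lambda>x. decay_kernel k x * \<bar>x\<bar> powr - \<gamma>) has_integral (1 / k) powr (1 - \<gamma>) / (1 - \<gamma>))
           {0..1 / k}"
proof -
  have powr_integral: "((\<lambda>x. x powr - \<gamma>) has_integral (1 / k) powr (1 - \<gamma>) / (1 - \<gamma>)) {0..1 / k}"
    using has_integral_powr_from_0[of "- \<gamma>" "1 / k"] \<gamma> k by (simp add: add.commute)
  have "decay_kernel k x * \<bar>x\<bar> powr - \<gamma> = x powr - \<gamma>" if "x \<in> {0..1 / k} - {0}" for x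
  proof -
    have "k * x \<le> 1" "0 < x"
      using that k by (auto simp: field_simps)
    then have "1 \<le> 1 / (k * x)"
      using k by (simp add: le_divide_eq)
    then show ?thesis
      using \<open>0 < x\<close> by (simp add: decay_kernel_def)
  qed
  from has_integral_spike_finite[of "{0}", OF _ this powr_integral] show ?thesis
    by simp
qed

lemma decay_kernel_powr_has_integral_away:
  fixes k \<gamma> :: real
  assumes k: "1 \<le> k" and \<gamma>: "0 < \<gamma>"
  defines "a \<equiv> 1 / k"
  shows "((\<lambda>x. decay_kernel k x * \<bar>x\<bar> powr - \<gamma>) has_integral (a * a powr - \<gamma> - a * pi powr - \<gamma>) / \<gamma>)
           {a..pi}"
proof -
  have "0 < a" "a \<le> 1"
    using k by (auto simp: a_def)
  then have a: "0 < a" "a \<le> pi"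
    using pi_gt3 by linarith+
  have "((\<lambda>x. a * x powr (- \<gamma> - 1)) has_integral
          (- a * pi powr - \<gamma> / \<gamma>) - (- a * a powr - \<gamma> / \<gamma>)) {a..pi}"
  proof (rule fundamental_theorem_of_calculus)
    fix x assume "x \<in> {a..pi}"
    then have "((\<lambda>x. - a * x powr - \<gamma> / \<gamma>) has_real_derivative a * x powr (- \<gamma> - 1)) (at x)"
      using a \<gamma> by (auto intro!: derivative_eq_intros)
    then show "((\<lambda>x. - a * x powr - \<gamma> / \<gamma>) has_vector_derivative a * x powr (- \<gamma> - 1))
                 (at x within {a..pi})"
      by (simp add: has_real_derivative_iff_has_vector_derivative has_vector_derivative_at_within)
  qed (use a in simp)
  moreover have "a * x powr (- \<gamma> - 1) = decay_kernel k x * \<bar>x\<bar> powr - \<gamma>" if "x \<in> {a..pi}" for x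
  proof -
    have "0 < x"
      using that a by auto
    moreover have "1 / (k * x) \<le> 1"
      using that k by (auto simp: a_def field_simps)
    ultimately have "decay_kernel k x = a / x"
      by (simp add: decay_kernel_def a_def min_def)
    with \<open>0 < x\<close> show ?thesis
      by (simp add: powr_diff)
  qed
  moreover have "(a * a powr - \<gamma> - a * pi powr - \<gamma>) / \<gamma>
      = (- a * pi powr - \<gamma> / \<gamma>) - (- a * a powr - \<gamma> / \<gamma>)"
    using \<gamma> by (simp add: field_simps)
  ultimately show ?thesis
    by (simp only:) (rule has_integral_eq)
qed

lemma decay_kernel_powr_integral:
  fixes k \<gamma> :: real
  assumes k: "1 \<le> k" and \<gamma>: "0 < \<gamma>" "\<gamma> < 1"
  shows "set_integrable lborel {-pi..pi} (\<lambda>x. decay_kernel k x * \<bar>x\<bar> powr - \<gamma>)"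
    and "(LINT x:{-pi..pi}|lborel. decay_kernel k x * \<bar>x\<bar> powr - \<gamma>)
           \<le> 2 * (1 / (1 - \<gamma>) + 1 / \<gamma>) * k powr (\<gamma> - 1)"
proof -
  define a where "a = 1 / k"
  define I where "I = a powr (1 - \<gamma>) / (1 - \<gamma>) + (a * a powr - \<gamma> - a * pi powr - \<gamma>) / \<gamma>"
  have "0 \<le> 1 / k" "1 / k \<le> 1"
    using k by auto
  then have a: "0 \<le> 1 / k" "1 / k \<le> pi"
    using pi_gt3 by linarith+
  have "((\<lambda>x. decay_kernel k x * \<bar>x\<bar> powr - \<gamma>) has_integral I) {0..pi}"
    unfolding I_def a_def
    using decay_kernel_powr_has_integral_near_zero[OF assms] decay_kernel_powr_has_integral_away[OF k \<gamma>(1)] a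
    by (intro has_integral_combine) auto
  then have "((\<lambda>x. decay_kernel k x * \<bar>x\<bar> powr - \<gamma>) has_integral 2 * I) {-pi..pi}"
    by (intro has_integral_even) (auto simp: decay_kernel_def)
  note integral = nonneg_has_integral_imp_set_integrable[OF _ _ this]
  show "set_integrable lborel {-pi..pi} (\<lambda>x. decay_kernel k x * \<bar>x\<bar> powr - \<gamma>)"
    using k by (intro integral) (auto simp: decay_kernel_nonneg)
  have "I \<le> a powr (1 - \<gamma>) / (1 - \<gamma>) + a * a powr - \<gamma> / \<gamma>"
    using k \<gamma> by (simp add: I_def a_def diff_divide_distrib)
  also have "a * a powr - \<gamma> = k powr (\<gamma> - 1)"
    using k by (simp add: a_def powr_diff powr_minus_divide powr_divide field_simps)
  also have "a powr (1 - \<gamma>) = k powr (\<gamma> - 1)"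
    using k by (simp add: a_def powr_divide powr_minus_divide flip: powr_minus)
      (simp add: powr_minus_divide[symmetric])
  finally have "2 * I \<le> 2 * (1 / (1 - \<gamma>) + 1 / \<gamma>) * k powr (\<gamma> - 1)"
    by (simp add: field_simps)
  then show "(LINT x:{-pi..pi}|lborel. decay_kernel k x * \<bar>x\<bar> powr - \<gamma>)
               \<le> 2 * (1 / (1 - \<gamma>) + 1 / \<gamma>) * k powr (\<gamma> - 1)"
    using k by (subst integral) (auto simp: decay_kernel_nonneg)
qed

section \<open>Set integrals and H\<ouml>lder's inequality\<close>

lemma set_integral_nonneg:
  fixes f :: "'a \<Rightarrow> real"
  assumes "\<And>x. x \<in> A \<Longrightarrow> 0 \<le> f x"
  shows "0 \<le> (LINT x:A|M. f x)"
  unfolding set_lebesgue_integral_def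
  by (auto intro!: integral_nonneg_AE simp: indicator_def assms)


lemma set_integral_sum:
  fixes f :: "'i \<Rightarrow> 'a \<Rightarrow> 'b::{banach, second_countable_topology}"
  assumes "\<And>i. i \<in> I \<Longrightarrow> set_integrable M A (f i)"
  shows "(LINT x:A|M. \<Sum>i\<in>I. f i x) = (\<Sum>i\<in>I. LINT x:A|M. f i x)"
  using assms unfolding set_lebesgue_integral_def set_integrable_def
  by (simp add: scaleR_sum_right)

lemma set_integrable_sum:
  fixes f :: "'i \<Rightarrow> 'a \<Rightarrow> 'b::{banach, second_countable_topology}"
  assumes "\<And>i. i \<in> I \<Longrightarrow> set_integrable M A (f i)"
  shows "set_integrable M A (\<lambda>x. \<Sum>i\<in>I. f i x)"
  using assms unfolding set_integrable_def
  by (simp add: scaleR_sum_right)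


lemma set_integrable_bounded_mult:
  fixes f g :: "'a \<Rightarrow> 'b::{real_normed_field, banach, second_countable_topology}"
  assumes f: "set_integrable M S f" and g: "g \<in> borel_measurable M"
    and bound: "\<And>x. x \<in> S \<Longrightarrow> norm (g x) \<le> B"
  shows "set_integrable M S (\<lambda>x. g x * f x)"
proof (rule set_integrable_bound[where f = "\<lambda>x. B * norm (f x)"])
  show "set_integrable M S (\<lambda>x. B * norm (f x))"
    using set_integrable_norm[OF f] by simp
  have "(\<lambda>x. indicator S x *\<^sub>R f x) \<in> borel_measurable M"
    using f by (simp add: set_integrable_def)
  then have "(\<lambda>x. g x * (indicator S x *\<^sub>R f x)) \<in> borel_measurable M"
    using g by measurable
  then show "set_borel_measurable M S (\<lambda>x. g x * f x)"
    by (simp add: set_borel_measurable_def)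
  show "AE x in M. x \<in> S \<longrightarrow> norm (g x * f x) \<le> norm (B * norm (f x))"
  proof (intro AE_I2 impI)
    fix x assume "x \<in> S"
    then have "norm (g x) * norm (f x) \<le> B * norm (f x)"
      by (intro mult_right_mono bound) auto
    then show "norm (g x * f x) \<le> norm (B * norm (f x))"
      by (simp add: norm_mult)
  qed
qed

lemma set_integrable_of_powr:
  fixes f :: "real \<Rightarrow> 'b::{banach, second_countable_topology}"
  assumes p: "1 \<le> p" and f: "f \<in> borel_measurable lborel"
    and fp: "set_integrable lborel {a..b} (\<lambda>x. norm (f x) powr p)"
  shows "set_integrable lborel {a..b} f"
proof (rule set_integrable_bound[where f = "\<lambda>x. 1 + norm (f x) powr p"])
  show "set_integrable lborel {a..b} (\<lambda>x. 1 + norm (f x) powr p)"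
    by (rule set_integral_add(1)[OF borel_integrable_atLeastAtMost' fp]) auto
  show "set_borel_measurable lborel {a..b} f"
    unfolding set_borel_measurable_def using f by measurable
  have "norm (f x) \<le> 1 + norm (f x) powr p" for x
  proof (cases "norm (f x) \<le> 1")
    case False
    then have "norm (f x) powr 1 \<le> norm (f x) powr p"
      using p by (intro powr_mono) auto
    then show ?thesis
      using False by simp
  qed (simp add: add_increasing2)
  then show "AE x in lborel. x \<in> {a..b} \<longrightarrow> norm (f x) \<le> norm (1 + norm (f x) powr p)"
    by auto
qed

lemma set_integrable_mult_of_powr:
  fixes u v :: "'a \<Rightarrow> real"
  assumes pq: "1 < p" "1 < q" "1 / p + 1 / q = 1" and S: "S \<in> sets M"
    and nonneg: "\<And>x. x \<in> S \<Longrightarrow> 0 \<le> u x" "\<And>x. x \<in> S \<Longrightarrow> 0 \<le> v x"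
    and meas: "u \<in> borel_measurable M" "v \<in> borel_measurable M"
    and up: "set_integrable M S (\<lambda>x. u x powr p)" and vq: "set_integrable M S (\<lambda>x. v x powr q)"
  shows "set_integrable M S (\<lambda>x. u x * v x)"
proof (rule set_integrable_bound[where f = "\<lambda>x. u x powr p / p + v x powr q / q"])
  show "set_integrable M S (\<lambda>x. u x powr p / p + v x powr q / q)"
    using up vq by (intro set_integral_add set_integrable_divide)
  show "set_borel_measurable M S (\<lambda>x. u x * v x)"
    unfolding set_borel_measurable_def using S meas by measurable
  have "u x * v x \<le> u x powr p / p + v x powr q / q" if "x \<in> S" for x
    using Youngs_inequality[OF pq] nonneg that by auto
  then show "AE x in M. x \<in> S \<longrightarrow> norm (u x * v x) \<le> norm (u x powr p / p + v x powr q / q)"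
    using nonneg by (intro AE_I2) (auto intro: order_trans[OF _ abs_ge_self])
qed

lemma Holder_set_integral_le_of_bounds:
  fixes u v :: "'a \<Rightarrow> real"
  assumes pq: "1 < p" "1 < q" "1 / p + 1 / q = 1"
    and nonneg: "\<And>x. x \<in> S \<Longrightarrow> 0 \<le> u x" "\<And>x. x \<in> S \<Longrightarrow> 0 \<le> v x"
    and uv: "set_integrable M S (\<lambda>x. u x * v x)"
    and up: "set_integrable M S (\<lambda>x. u x powr p)" and vq: "set_integrable M S (\<lambda>x. v x powr q)"
    and U: "0 < U" "(LINT x:S|M. u x powr p) \<le> U" and V: "0 < V" "(LINT x:S|M. v x powr q) \<le> V"
  shows "(LINT x:S|M. u x * v x) \<le> U powr (1 / p) * V powr (1 / q)"
proof -
  define a b where "a = U powr (1 / p)" and "b = V powr (1 / q)"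
  have ab: "0 < a" "0 < b" "a powr p = U" "b powr q = V"
    using pq U V by (auto simp: a_def b_def powr_powr)
  have "u x * v x / (a * b) \<le> u x powr p / (p * U) + v x powr q / (q * V)" if "x \<in> S" for x
    using Youngs_inequality[OF pq, of "u x / a" "v x / b"] nonneg[OF that] ab
    by (simp add: powr_divide field_simps)
  then have "(LINT x:S|M. u x * v x / (a * b)) \<le> (LINT x:S|M. u x powr p / (p * U) + v x powr q / (q * V))"
    using uv up vq by (intro set_integral_mono) auto
  also have "\<dots> = (LINT x:S|M. u x powr p) / (p * U) + (LINT x:S|M. v x powr q) / (q * V)"
    using up vq by simp
  also have "\<dots> \<le> 1 / p + 1 / q"
    using pq U V by (intro add_mono) (auto simp: divide_le_eq)
  finally show ?thesis
    using ab pq by (simp add: a_def b_def field_simps)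
qed

lemma Holder_inequality_set_integral:
  fixes u v :: "'a \<Rightarrow> real"
  assumes pq: "1 < p" "1 < q" "1 / p + 1 / q = 1" and S: "S \<in> sets M"
    and nonneg: "\<And>x. x \<in> S \<Longrightarrow> 0 \<le> u x" "\<And>x. x \<in> S \<Longrightarrow> 0 \<le> v x"
    and meas: "u \<in> borel_measurable M" "v \<in> borel_measurable M"
    and up: "set_integrable M S (\<lambda>x. u x powr p)" and vq: "set_integrable M S (\<lambda>x. v x powr q)"
  shows "set_integrable M S (\<lambda>x. u x * v x)"
    and "(LINT x:S|M. u x * v x)
           \<le> (LINT x:S|M. u x powr p) powr (1 / p) * (LINT x:S|M. v x powr q) powr (1 / q)"
proof -
  show uv: "set_integrable M S (\<lambda>x. u x * v x)"
    by (rule set_integrable_mult_of_powr[OF assms])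
  define U V where "U = (LINT x:S|M. u x powr p)" and "V = (LINT x:S|M. v x powr q)"
  have "0 \<le> U" "0 \<le> V"
    unfolding U_def V_def by (auto intro!: set_integral_nonneg)
  \<comment> \<open>\<open>U + e\<close> and \<open>V + e\<close> are positive even if \<open>U\<close> or \<open>V\<close> vanishes; then let \<open>e \<rightarrow> 0\<close>.\<close>
  have "((\<lambda>e. c + e) \<longlongrightarrow> c) (at_right 0)" for c :: real
    using tendsto_add[OF tendsto_const[of c] tendsto_ident_at[of 0 "{0<..}"]] by simp
  then have "((\<lambda>e. (U + e) powr (1 / p) * (V + e) powr (1 / q)) \<longlongrightarrow> U powr (1 / p) * V powr (1 / q))
          (at_right 0)"
    using pq \<open>0 \<le> U\<close> \<open>0 \<le> V\<close>
    by (intro tendsto_mult tendsto_powr') (auto intro!: eventually_at_rightI[of 0 1])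
  moreover have "(LINT x:S|M. u x * v x) \<le> (U + e) powr (1 / p) * (V + e) powr (1 / q)" if "0 < e" for e
    using \<open>0 \<le> U\<close> \<open>0 \<le> V\<close> that
    by (intro Holder_set_integral_le_of_bounds[OF pq nonneg uv up vq]) (auto simp: U_def V_def)
  ultimately show "(LINT x:S|M. u x * v x) \<le> U powr (1 / p) * V powr (1 / q)"
    by (intro tendsto_lowerbound) (auto intro!: eventually_at_rightI[of 0 1])
qed

lemma Holder_weight_factors:
  fixes F h w p :: real
  assumes p: "1 < p" and nonneg: "0 \<le> F" "0 \<le> h" "0 \<le> w" and h_zero: "w = 0 \<Longrightarrow> h = 0"
  defines "q \<equiv> p / (p - 1)"
  shows "(F * h powr (1 / p) * w powr (1 / p)) * (h powr (1 / q) * w powr (- 1 / p)) = F * h"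
    and "(F * h powr (1 / p) * w powr (1 / p)) powr p = h * F powr p * w"
    and "(h powr (1 / q) * w powr (- 1 / p)) powr q = h * w powr (- 1 / (p - 1))"
proof -
  have "1 / p + 1 / q = 1"
    using p by (simp add: q_def field_simps)
  show "(F * h powr (1 / p) * w powr (1 / p)) * (h powr (1 / q) * w powr (- 1 / p)) = F * h"
  proof (cases "w = 0")
    case False
    have "(F * h powr (1 / p) * w powr (1 / p)) * (h powr (1 / q) * w powr (- 1 / p))
        = F * (h powr (1 / p) * h powr (1 / q)) * (w powr (1 / p) * w powr (- 1 / p))"
      by (simp add: mult_ac)
    also have "\<dots> = F * h"
      using False nonneg \<open>1 / p + 1 / q = 1\<close> by (simp flip: powr_add)
    finally show ?thesis .
  qed (simp add: h_zero)
  show "(F * h powr (1 / p) * w powr (1 / p)) powr p = h * F powr p * w"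
    using nonneg p by (simp add: powr_mult powr_powr)
  show "(h powr (1 / q) * w powr (- 1 / p)) powr q = h * w powr (- 1 / (p - 1))"
    using nonneg p by (simp add: q_def powr_mult powr_powr)
qed

(* The hypothesis h_zero is needed because w powr (- 1 / (p - 1)) is the junk value 0 where w vanishes. *)
lemma weighted_Holder_set_integral:
  fixes F h w :: "'a \<Rightarrow> real"
  assumes p: "1 < p" and S: "S \<in> sets M"
    and nonneg: "\<And>x. x \<in> S \<Longrightarrow> 0 \<le> F x" "\<And>x. x \<in> S \<Longrightarrow> 0 \<le> h x" "\<And>x. x \<in> S \<Longrightarrow> 0 \<le> w x"
    and h_zero: "\<And>x. x \<in> S \<Longrightarrow> w x = 0 \<Longrightarrow> h x = 0"
    and meas: "F \<in> borel_measurable M" "h \<in> borel_measurable M" "w \<in> borel_measurable M"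
    and int1: "set_integrable M S (\<lambda>x. h x * F x powr p * w x)"
    and int2: "set_integrable M S (\<lambda>x. h x * w x powr (- 1 / (p - 1)))"
  shows "set_integrable M S (\<lambda>x. F x * h x)"
    and "(LINT x:S|M. F x * h x) powr p
           \<le> (LINT x:S|M. h x * F x powr p * w x) * (LINT x:S|M. h x * w x powr (- 1 / (p - 1))) powr (p - 1)"
proof -
  define q where "q = p / (p - 1)"
  have pq: "1 < p" "1 < q" "1 / p + 1 / q = 1"
    using p by (auto simp: q_def field_simps)
  define u v where "u x = F x * h x powr (1 / p) * w x powr (1 / p)"
    and "v x = h x powr (1 / q) * w x powr (- 1 / p)" for x
  have factors: "u x * v x = F x * h x" "u x powr p = h x * F x powr p * w x"
    "v x powr q = h x * w x powr (- 1 / (p - 1))" if "x \<in> S" for x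
    using Holder_weight_factors[OF p nonneg[OF that] h_zero[OF that]] by (simp_all add: u_def v_def q_def)
  have u_meas: "u \<in> borel_measurable M" and v_meas: "v \<in> borel_measurable M"
    unfolding u_def[abs_def] v_def[abs_def] using meas by measurable
  have u_nonneg: "0 \<le> u x" and v_nonneg: "0 \<le> v x" if "x \<in> S" for x
    using nonneg[OF that] by (simp_all add: u_def v_def)
  have "set_integrable M S (\<lambda>x. u x powr p) \<longleftrightarrow> set_integrable M S (\<lambda>x. h x * F x powr p * w x)"
    "set_integrable M S (\<lambda>x. v x powr q) \<longleftrightarrow> set_integrable M S (\<lambda>x. h x * w x powr (- 1 / (p - 1)))"
    by (rule set_integrable_cong, simp_all add: factors)+
  then have int_u: "set_integrable M S (\<lambda>x. u x powr p)" and int_v: "set_integrable M S (\<lambda>x. v x powr q)"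
    using int1 int2 by simp_all
  note Holder = Holder_inequality_set_integral[OF pq S u_nonneg v_nonneg u_meas v_meas int_u int_v]
  have "set_integrable M S (\<lambda>x. F x * h x) \<longleftrightarrow> set_integrable M S (\<lambda>x. u x * v x)"
    by (intro set_integrable_cong) (simp_all add: factors)
  with Holder show "set_integrable M S (\<lambda>x. F x * h x)"
    by simp
  define G X A where "G = (LINT x:S|M. F x * h x)" and "X = (LINT x:S|M. h x * F x powr p * w x)"
    and "A = (LINT x:S|M. h x * w x powr (- 1 / (p - 1)))"
  have "0 \<le> G" "0 \<le> X" "0 \<le> A"
    unfolding G_def X_def A_def by (auto intro!: set_integral_nonneg simp: nonneg)
  have "(LINT x:S|M. F x * h x) = (LINT x:S|M. u x * v x)"
    "(LINT x:S|M. u x powr p) = X" "(LINT x:S|M. v x powr q) = A"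
    unfolding X_def A_def by (auto intro!: set_lebesgue_integral_cong S simp: factors)
  with Holder have "G \<le> X powr (1 / p) * A powr (1 / q)"
    by (simp add: G_def)
  then have "G powr p \<le> (X powr (1 / p) * A powr (1 / q)) powr p"
    using \<open>0 \<le> G\<close> p by (intro powr_mono2) auto
  also have "\<dots> = X * A powr (p - 1)"
    using \<open>0 \<le> X\<close> \<open>0 \<le> A\<close> p by (simp add: powr_mult powr_powr q_def)
  finally show "G powr p \<le> X * A powr (p - 1)" .
qed

section \<open>Averages of Fourier coefficients\<close>

lemma net_max_bounds:
  assumes "\<And>m n. m \<le> n \<Longrightarrow> k \<le> card {m..n} \<Longrightarrow> norm (\<Sum>j\<in>{m..n}. a j) / real (card {m..n}) \<le> B"
  shows "0 \<le> net_max a k" and "net_max a k \<le> B"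
proof -
  define T where "T = {norm (\<Sum>j\<in>w. a j) / real (card w) | w. w \<in> int_intervals \<and> card w \<ge> k}"
  have bound: "t \<le> B" if "t \<in> T" for t
    using that assms by (auto simp: T_def int_intervals_def)
  have "{0..int k} \<in> int_intervals" "k \<le> card {0..int k}"
    by (auto simp: int_intervals_def)
  then have witness: "norm (\<Sum>j\<in>{0..int k}. a j) / real (card {0..int k}) \<in> T"
    unfolding T_def by blast
  show "net_max a k \<le> B"
    unfolding net_max_def T_def[symmetric] using witness bound by (intro cSup_least) auto
  have "0 \<le> norm (\<Sum>j\<in>{0..int k}. a j) / real (card {0..int k})"
    by simp
  also have "\<dots> \<le> Sup T"
    using witness bound by (intro cSup_upper) (auto simp: bdd_above_def)
  finally show "0 \<le> net_max a k"
    by (simp add: net_max_def T_def)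
qed

lemma exp_ii_int_measurable [measurable]:
  "(\<lambda>x::real. exp (- (\<i> * of_int j * of_real x))) \<in> borel_measurable borel"
  by (intro borel_measurable_continuous_onI continuous_intros)

lemma sum_fourier_coeff:
  fixes f :: "real \<Rightarrow> complex"
  assumes f: "set_integrable lborel {-pi..pi} f"
  shows "(\<Sum>j\<in>J. fourier_coeff f j) = complex_of_real (1 / (2 * pi)) *
           (LINT x:{-pi..pi}|lborel. f x * (\<Sum>j\<in>J. exp (- (\<i> * of_int j * of_real x))))"
proof -
  have "set_integrable lborel {-pi..pi} (\<lambda>x. exp (- (\<i> * of_int j * of_real x)) * f x)" for j
    by (rule set_integrable_bounded_mult[OF f, where B = 1]) auto
  then have "integrable lborel (\<lambda>x. indicator {-pi..pi} x *\<^sub>R (f x * exp (- (\<i> * of_int j * of_real x))))" for j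
    by (simp add: set_integrable_def mult.commute)
  then show ?thesis
    unfolding fourier_coeff_def set_lebesgue_integral_def
    by (simp add: sum_distrib_left scaleR_sum_right flip: integral_sum)
qed

lemma norm_integral_exp_sum_le:
  fixes f :: "real \<Rightarrow> complex" and k :: real and m n :: int
  assumes f: "set_integrable lborel {-pi..pi} f" and k: "1 \<le> k" "k \<le> real (card {m..n})"
  shows "norm (LINT x:{-pi..pi}|lborel. (\<Sum>j\<in>{m..n}. exp (- (\<i> * of_int j * of_real x))) * f x)
           \<le> 8 * real (card {m..n}) * (LINT x:{-pi..pi}|lborel. norm (f x) * decay_kernel k x)"
proof -
  define N where "N = real (card {m..n})"
  define D where "D x = (\<Sum>j\<in>{m..n}. exp (- (\<i> * of_int j * of_real x)))" for x
  have "D \<in> borel_measurable lborel"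
    unfolding D_def by measurable
  moreover have "norm (D x) \<le> N" for x
    unfolding D_def N_def by (rule norm_sum_exp_ii_le_card)
  ultimately have int_Df: "set_integrable lborel {-pi..pi} (\<lambda>x. D x * f x)"
    by (intro set_integrable_bounded_mult[OF f])
  have "set_integrable lborel {-pi..pi} (\<lambda>x. decay_kernel k x * norm (f x))"
    by (rule set_integrable_bounded_mult[OF set_integrable_norm[OF f], where B = 1])
       (use k in \<open>auto simp: decay_kernel_nonneg decay_kernel_le_one\<close>)
  then have int_kernel: "set_integrable lborel {-pi..pi} (\<lambda>x. norm (f x) * decay_kernel k x)"
    by (simp add: mult.commute)
  have pointwise: "norm (D x * f x) \<le> 8 * N * (norm (f x) * decay_kernel k x)"
    if "x \<in> {-pi..pi}" "x \<noteq> 0" for x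
  proof -
    have "norm (D x) \<le> 8 * N * decay_kernel N x"
      using norm_sum_exp_ii_le_decay_kernel[of x m n] that by (simp add: D_def N_def abs_le_iff)
    also have "\<dots> \<le> 8 * N * decay_kernel k x"
      using k by (intro mult_left_mono decay_kernel_antimono) (auto simp: N_def)
    finally have "norm (D x) * norm (f x) \<le> 8 * N * decay_kernel k x * norm (f x)"
      by (rule mult_right_mono) simp
    then show ?thesis
      by (simp add: norm_mult mult_ac)
  qed
  have "norm (LINT x:{-pi..pi}|lborel. D x * f x) \<le> (LINT x:{-pi..pi}|lborel. norm (D x * f x))"
    by (rule set_integral_norm_bound[OF int_Df])
  also have "\<dots> \<le> (LINT x:{-pi..pi}|lborel. 8 * N * (norm (f x) * decay_kernel k x))"
    using AE_lborel_singleton[of 0] pointwise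
    by (intro set_integral_mono_AE set_integrable_norm int_Df int_kernel set_integrable_mult_right)
      auto
  finally show ?thesis
    by (simp add: D_def N_def)
qed

lemma fourier_interval_average_le:
  fixes f :: "real \<Rightarrow> complex" and k :: real and m n :: int
  assumes f: "set_integrable lborel {-pi..pi} f" and k: "1 \<le> k" "k \<le> real (card {m..n})"
  shows "norm (\<Sum>j\<in>{m..n}. fourier_coeff f j) / real (card {m..n})
           \<le> 2 * (LINT x:{-pi..pi}|lborel. norm (f x) * decay_kernel k x)"
proof -
  define N I where "N = real (card {m..n})" and "I = (LINT x:{-pi..pi}|lborel. norm (f x) * decay_kernel k x)"
  have "0 < N"
    using k by (simp add: N_def)
  have "0 \<le> I"
    unfolding I_def using k by (intro set_integral_nonneg) (simp add: decay_kernel_nonneg)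
  have "norm (\<Sum>j\<in>{m..n}. fourier_coeff f j)
      = norm (LINT x:{-pi..pi}|lborel. (\<Sum>j\<in>{m..n}. exp (- (\<i> * of_int j * of_real x))) * f x) / (2 * pi)"
    by (simp add: sum_fourier_coeff[OF f] norm_mult norm_divide mult.commute)
  also have "\<dots> \<le> 8 * N * I / (2 * pi)"
    using norm_integral_exp_sum_le[OF f k] by (intro divide_right_mono) (simp_all add: N_def I_def)
  also have "\<dots> = 4 / pi * (N * I)"
    by simp
  also have "\<dots> \<le> 2 * (N * I)"
    using \<open>0 < N\<close> \<open>0 \<le> I\<close> pi_gt3 by (intro mult_right_mono) (auto simp: divide_le_eq)
  finally show ?thesis
    using \<open>0 < N\<close> by (simp add: N_def I_def pos_divide_le_eq mult_ac)
qed

lemma net_max_fourier_coeff_le: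
  fixes f :: "real \<Rightarrow> complex"
  assumes "set_integrable lborel {-pi..pi} f" "1 \<le> k"
  shows "0 \<le> net_max (fourier_coeff f) k"
    and "net_max (fourier_coeff f) k \<le> 2 * (LINT x:{-pi..pi}|lborel. norm (f x) * decay_kernel (real k) x)"
proof -
  have avg: "norm (\<Sum>j\<in>{m..n}. fourier_coeff f j) / real (card {m..n})
          \<le> 2 * (LINT x:{-pi..pi}|lborel. norm (f x) * decay_kernel (real k) x)"
    if "m \<le> n" "k \<le> card {m..n}" for m n
    using that assms(2) by (intro fourier_interval_average_le[OF assms(1)]) auto
  show "0 \<le> net_max (fourier_coeff f) k"
    using avg by (rule net_max_bounds)
  show "net_max (fourier_coeff f) k \<le> 2 * (LINT x:{-pi..pi}|lborel. norm (f x) * decay_kernel (real k) x)"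
    using avg by (rule net_max_bounds)
qed

section \<open>The net norm of the Fourier coefficients\<close>

lemma set_integrable_decay_kernel_weighted:
  fixes g :: "real \<Rightarrow> real"
  assumes g: "set_integrable lborel {-pi..pi} g" and "0 \<le> k" "0 \<le> s"
  shows "set_integrable lborel {-pi..pi} (\<lambda>x. decay_kernel k x * g x * \<bar>x\<bar> powr s)"
proof -
  have "set_integrable lborel {-pi..pi} (\<lambda>x. (decay_kernel k x * \<bar>x\<bar> powr s) * g x)"
  proof (rule set_integrable_bounded_mult[OF g])
    show "(\<lambda>x. decay_kernel k x * \<bar>x\<bar> powr s) \<in> borel_measurable lborel"
      by measurable
    fix x :: real assume "x \<in> {-pi..pi}"
    then have "decay_kernel k x * \<bar>x\<bar> powr s \<le> 1 * pi powr s"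
      using assms by (intro mult_mono decay_kernel_le_one powr_mono2) auto
    then show "norm (decay_kernel k x * \<bar>x\<bar> powr s) \<le> pi powr s"
      using assms by (simp add: decay_kernel_nonneg)
  qed
  then show ?thesis
    by (simp add: mult_ac)
qed

lemma decay_kernel_Holder:
  fixes f :: "real \<Rightarrow> 'b::{banach, second_countable_topology}" and p s k :: real
  assumes p: "1 < p" and s: "0 < s" "s < p - 1" and k: "1 \<le> k"
    and f: "f \<in> borel_measurable lborel" "set_integrable lborel {-pi..pi} (\<lambda>x. norm (f x) powr p)"
  defines "\<gamma> \<equiv> s / (p - 1)"
  shows "(LINT x:{-pi..pi}|lborel. norm (f x) * decay_kernel k x) powr p
           \<le> (LINT x:{-pi..pi}|lborel. decay_kernel k x * norm (f x) powr p * \<bar>x\<bar> powr s)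
              * (2 * (1 / (1 - \<gamma>) + 1 / \<gamma>) * k powr (\<gamma> - 1)) powr (p - 1)"
proof -
  have \<gamma>: "0 < \<gamma>" "\<gamma> < 1"
    using p s by (auto simp: \<gamma>_def)
  have powr_\<gamma>: "(\<bar>x\<bar> powr s) powr (- 1 / (p - 1)) = \<bar>x\<bar> powr - \<gamma>" for x :: real
    by (simp add: powr_powr \<gamma>_def)
  define A where "A = (LINT x:{-pi..pi}|lborel. decay_kernel k x * (\<bar>x\<bar> powr s) powr (- 1 / (p - 1)))"
  have int_A: "set_integrable lborel {-pi..pi} (\<lambda>x. decay_kernel k x * (\<bar>x\<bar> powr s) powr (- 1 / (p - 1)))"
    unfolding powr_\<gamma> using decay_kernel_powr_integral(1)[of k \<gamma>] k \<gamma> by simp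
  have "A \<le> 2 * (1 / (1 - \<gamma>) + 1 / \<gamma>) * k powr (\<gamma> - 1)"
    unfolding A_def powr_\<gamma> using decay_kernel_powr_integral(2)[of k \<gamma>] k \<gamma> by simp
  moreover have "0 \<le> A"
    unfolding A_def using k by (intro set_integral_nonneg) (simp add: decay_kernel_nonneg)
  moreover have int_X: "set_integrable lborel {-pi..pi} (\<lambda>x. decay_kernel k x * norm (f x) powr p * \<bar>x\<bar> powr s)"
    using f(2) s k by (intro set_integrable_decay_kernel_weighted) auto
  then have "0 \<le> (LINT x:{-pi..pi}|lborel. decay_kernel k x * norm (f x) powr p * \<bar>x\<bar> powr s)"
    using k by (intro set_integral_nonneg) (simp add: decay_kernel_nonneg)
  moreover have "(LINT x:{-pi..pi}|lborel. norm (f x) * decay_kernel k x) powr p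
      \<le> (LINT x:{-pi..pi}|lborel. decay_kernel k x * norm (f x) powr p * \<bar>x\<bar> powr s) * A powr (p - 1)"
    unfolding A_def using f(1) k
    by (intro weighted_Holder_set_integral[OF p _ _ _ _ _ _ _ _ int_X int_A]) (auto simp: decay_kernel_nonneg)
  ultimately show ?thesis
    using p by (elim order_trans) (intro mult_left_mono powr_mono2, auto)
qed

lemma net_term_fourier_coeff_le:
  fixes f :: "real \<Rightarrow> complex" and p s :: real and k :: nat
  assumes p: "1 < p" and s: "0 < s" "s < p - 1" and k: "1 \<le> k"
    and f: "f \<in> borel_measurable lborel" "set_integrable lborel {-pi..pi} (\<lambda>x. norm (f x) powr p)"
  defines "\<gamma> \<equiv> s / (p - 1)"
  shows "net_term (p / (p - 1)) p (fourier_coeff f) k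
           \<le> 2 powr p * (2 * (1 / (1 - \<gamma>) + 1 / \<gamma>)) powr (p - 1) * real k powr (s - 1)
              * (LINT x:{-pi..pi}|lborel. decay_kernel (real k) x * norm (f x) powr p * \<bar>x\<bar> powr s)"
proof -
  define B where "B = 2 * (1 / (1 - \<gamma>) + 1 / \<gamma>)"
  have "0 < B"
    using p s unfolding B_def \<gamma>_def by (intro mult_pos_pos add_pos_pos) auto
  define G X where "G = (LINT x:{-pi..pi}|lborel. norm (f x) * decay_kernel (real k) x)"
    and "X = (LINT x:{-pi..pi}|lborel. decay_kernel (real k) x * norm (f x) powr p * \<bar>x\<bar> powr s)"
  have Holder: "G powr p \<le> X * (B * real k powr (\<gamma> - 1)) powr (p - 1)"
    using decay_kernel_Holder[OF p s _ f, of "real k"] k by (simp add: G_def X_def B_def \<gamma>_def)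
  have net_max: "0 \<le> net_max (fourier_coeff f) k" "net_max (fourier_coeff f) k \<le> 2 * G"
    using net_max_fourier_coeff_le[OF set_integrable_of_powr[OF _ f(1) f(2)] k] p
    by (simp_all add: G_def)
  have "p / (p / (p - 1)) - 1 = p - 2"
    using p by (simp add: field_simps)
  then have "net_term (p / (p - 1)) p (fourier_coeff f) k = real k powr (p - 2) * net_max (fourier_coeff f) k powr p"
    unfolding net_term_def by (rule arg_cong)
  also have "\<dots> \<le> real k powr (p - 2) * (2 powr p * G powr p)"
    using net_max p by (auto intro!: mult_left_mono powr_mono2 simp flip: powr_mult)
  also have "\<dots> \<le> real k powr (p - 2) * (2 powr p * (X * (B * real k powr (\<gamma> - 1)) powr (p - 1)))"
    using Holder by (intro mult_left_mono) auto
  also have "\<dots> = 2 powr p * B powr (p - 1) * (real k powr (p - 2) * real k powr ((\<gamma> - 1) * (p - 1))) * X"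
    using \<open>0 < B\<close> k by (simp add: powr_mult powr_powr mult_ac)
  also have "p - 2 + (\<gamma> - 1) * (p - 1) = s - 1"
    using p by (simp add: \<gamma>_def field_simps)
  then have "real k powr (p - 2) * real k powr ((\<gamma> - 1) * (p - 1)) = real k powr (s - 1)"
    by (metis powr_add)
  finally show ?thesis
    by (simp add: B_def X_def)
qed

lemma sum_net_term_fourier_coeff_le:
  fixes f :: "real \<Rightarrow> complex" and p s :: real
  assumes p: "1 < p" and s: "0 < s" "s < 1" "s < p - 1"
    and f: "f \<in> borel_measurable lborel" "set_integrable lborel {-pi..pi} (\<lambda>x. norm (f x) powr p)"
  defines "\<gamma> \<equiv> s / (p - 1)"
  shows "(\<Sum>k=1..n. net_term (p / (p - 1)) p (fourier_coeff f) k)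
           \<le> 2 powr p * (2 * (1 / (1 - \<gamma>) + 1 / \<gamma>)) powr (p - 1) * (1 / s + 1 + 1 / (1 - s))
              * (LINT x:{-pi..pi}|lborel. norm (f x) powr p)"
proof -
  define C M where "C = 2 powr p * (2 * (1 / (1 - \<gamma>) + 1 / \<gamma>)) powr (p - 1)"
    and "M = 1 / s + 1 + 1 / (1 - s)"
  let ?X = "\<lambda>k x. decay_kernel (real k) x * norm (f x) powr p * \<bar>x\<bar> powr s"
  have int_X: "set_integrable lborel {-pi..pi} (?X k)" for k
    using f(2) s by (intro set_integrable_decay_kernel_weighted) auto
  have pointwise: "(\<Sum>k=1..n. real k powr (s - 1) * ?X k x) \<le> M * norm (f x) powr p" for x
  proof -
    have "(\<Sum>k=1..n. real k powr (s - 1) * ?X k x)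
        = (\<Sum>k=1..n. real k powr (s - 1) * decay_kernel (real k) x) * \<bar>x\<bar> powr s * norm (f x) powr p"
      by (simp add: sum_distrib_left sum_distrib_right mult_ac)
    also have "\<dots> \<le> M * norm (f x) powr p"
      using sum_decay_kernel_le[OF s(1,2), where n = n and x = x] by (intro mult_right_mono) (auto simp: M_def)
    finally show ?thesis .
  qed
  have "(\<Sum>k=1..n. net_term (p / (p - 1)) p (fourier_coeff f) k)
      \<le> (\<Sum>k=1..n. C * (real k powr (s - 1) * (LINT x:{-pi..pi}|lborel. ?X k x)))"
    using net_term_fourier_coeff_le[OF p s(1,3) _ f] by (intro sum_mono) (auto simp: C_def \<gamma>_def mult_ac)
  also have "\<dots> = C * (LINT x:{-pi..pi}|lborel. \<Sum>k=1..n. real k powr (s - 1) * ?X k x)"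
    using int_X by (simp add: set_integral_sum sum_distrib_left)
  also have "\<dots> \<le> C * (LINT x:{-pi..pi}|lborel. M * norm (f x) powr p)"
    using int_X f(2) pointwise
    by (intro mult_left_mono set_integral_mono set_integrable_sum set_integrable_mult_right) (auto simp: C_def)
  finally show ?thesis
    by (simp add: C_def M_def mult_ac)
qed

lemma net_norm_le_of_partial_sums:
  assumes q: "0 < q" and B: "\<And>n. (\<Sum>k=1..n. net_term r q a k) \<le> B"
  shows "summable (\<lambda>k. net_term r q a (Suc k))" and "net_norm r q a \<le> B powr (1 / q)"
proof -
  have nonneg: "0 \<le> net_term r q a k" for k
    by (simp add: net_term_def)
  have partial: "(\<Sum>k<n. net_term r q a (Suc k)) \<le> B" for n
    using B[of n] by (simp add: sum_bounds_lt_plus1)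
  show summable: "summable (\<lambda>k. net_term r q a (Suc k))"
    using partial[of "Suc _"] nonneg by (intro bounded_imp_summable) (auto simp: lessThan_Suc_atMost)
  have "(\<Sum>k. net_term r q a (Suc k)) \<le> B"
    by (rule suminf_le_const[OF summable partial])
  then show "net_norm r q a \<le> B powr (1 / q)"
    unfolding net_norm_def using q nonneg by (intro powr_mono2 suminf_nonneg summable) auto
qed

lemma net_norm_fourier_coeff_le:
  fixes p :: real
  assumes p: "1 < p"
  obtains C where "0 < C"
    and "\<And>f. f \<in> borel_measurable lborel \<Longrightarrow> set_integrable lborel {-pi..pi} (\<lambda>x. norm (f x) powr p) \<Longrightarrow>
           summable (\<lambda>k. net_term (p / (p - 1)) p (fourier_coeff f) (Suc k)) \<and>
           net_norm (p / (p - 1)) p (fourier_coeff f) \<le> C * Lp_norm_pi p f"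
proof -
  define s where "s = min 1 (p - 1) / 2"
  have s: "0 < s" "s < 1" "s < p - 1"
    using p by (auto simp: s_def min_def)
  define \<gamma> where "\<gamma> = s / (p - 1)"
  define K where "K = 2 powr p * (2 * (1 / (1 - \<gamma>) + 1 / \<gamma>)) powr (p - 1) * (1 / s + 1 + 1 / (1 - s))"
  have "0 < \<gamma>" "\<gamma> < 1"
    using p s by (auto simp: \<gamma>_def)
  then have "0 < 2 * (1 / (1 - \<gamma>) + 1 / \<gamma>)" "0 < 1 / s + 1 + 1 / (1 - s)"
    using s by (auto intro!: add_pos_pos)
  then have "0 < K"
    unfolding K_def by simp
  show thesis
  proof (rule that[of "K powr (1 / p)"])
    fix f :: "real \<Rightarrow> complex"
    assume f: "f \<in> borel_measurable lborel" "set_integrable lborel {-pi..pi} (\<lambda>x. norm (f x) powr p)"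
    have partial_sums: "(\<Sum>k=1..n. net_term (p / (p - 1)) p (fourier_coeff f) k)
        \<le> K * (LINT x:{-pi..pi}|lborel. norm (f x) powr p)" for n
      unfolding K_def \<gamma>_def by (rule sum_net_term_fourier_coeff_le[OF p s f])
    have "0 \<le> (LINT x:{-pi..pi}|lborel. norm (f x) powr p)"
      by (intro set_integral_nonneg) simp
    then have "(K * (LINT x:{-pi..pi}|lborel. norm (f x) powr p)) powr (1 / p) = K powr (1 / p) * Lp_norm_pi p f"
      using \<open>0 < K\<close> by (simp add: Lp_norm_pi_def powr_mult)
    with net_norm_le_of_partial_sums[OF _ partial_sums] p
    show "summable (\<lambda>k. net_term (p / (p - 1)) p (fourier_coeff f) (Suc k)) \<and>
        net_norm (p / (p - 1)) p (fourier_coeff f) \<le> K powr (1 / p) * Lp_norm_pi p f"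
      by simp
  qed (use \<open>0 < K\<close> in simp)
qed

lemma fourier_coeff_restrict:
  "fourier_coeff (\<lambda>x. indicator {-pi..pi} x *\<^sub>R f x) = fourier_coeff f"
  unfolding fourier_coeff_def fun_eq_iff
  by (auto intro!: arg_cong[where f = "\<lambda>t. _ * t"] set_lebesgue_integral_cong)

lemma Lp_norm_pi_restrict:
  "Lp_norm_pi p (\<lambda>x. indicator {-pi..pi} x *\<^sub>R f x) = Lp_norm_pi p f"
  unfolding Lp_norm_pi_def
  by (auto intro!: arg_cong[where f = "\<lambda>t. t powr _"] set_lebesgue_integral_cong)

theorem mainTheorem6:
  fixes p :: real
  assumes "1 < p"
  shows "\<exists>C>0. \<forall>f :: real \<Rightarrow> complex.
           set_borel_measurable lborel {-pi..pi} f \<and>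
           set_integrable lborel {-pi..pi} (\<lambda>x. norm (f x) powr p) \<longrightarrow>
             summable (\<lambda>k. net_term (p / (p - 1)) p (fourier_coeff f) (Suc k)) \<and>
             net_norm (p / (p - 1)) p (fourier_coeff f) \<le> C * Lp_norm_pi p f"
proof (rule net_norm_fourier_coeff_le[OF assms])
  fix C :: real
  assume C: "0 < C"
    and bound: "\<And>g. g \<in> borel_measurable lborel \<Longrightarrow> set_integrable lborel {-pi..pi} (\<lambda>x. norm (g x) powr p) \<Longrightarrow>
           summable (\<lambda>k. net_term (p / (p - 1)) p (fourier_coeff g) (Suc k)) \<and>
           net_norm (p / (p - 1)) p (fourier_coeff g) \<le> C * Lp_norm_pi p g"
  show ?thesis
  proof (intro exI[of _ C] conjI[OF C] allI impI)
    fix f :: "real \<Rightarrow> complex"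
    assume "set_borel_measurable lborel {-pi..pi} f \<and> set_integrable lborel {-pi..pi} (\<lambda>x. norm (f x) powr p)"
    then have f: "set_borel_measurable lborel {-pi..pi} f" "set_integrable lborel {-pi..pi} (\<lambda>x. norm (f x) powr p)"
      by auto
    define g where "g = (\<lambda>x. indicator {-pi..pi} x *\<^sub>R f x)"
    have "set_integrable lborel {-pi..pi} (\<lambda>x. norm (g x) powr p)
        \<longleftrightarrow> set_integrable lborel {-pi..pi} (\<lambda>x. norm (f x) powr p)"
      by (rule set_integrable_cong) (auto simp: g_def)
    with f have "g \<in> borel_measurable lborel" "set_integrable lborel {-pi..pi} (\<lambda>x. norm (g x) powr p)"
      by (simp_all add: g_def set_borel_measurable_def)
    from bound[OF this] show "summable (\<lambda>k. net_term (p / (p - 1)) p (fourier_coeff f) (Suc k)) \<and>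
        net_norm (p / (p - 1)) p (fourier_coeff f) \<le> C * Lp_norm_pi p f"
      by (simp add: g_def fourier_coeff_restrict Lp_norm_pi_restrict)
  qed
qed

end
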